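(* Let $\Bbbk$ be algebraically closed, $T$ a torus acting linearly on a finite-dimensional $\Bbbk$-vector space $V$, $X\subseteq\mathbb PV$ a closed $T$-invariant subscheme with $X^T$ finite, and $S:\mathbb G_m\to T$ with $X^S=X^T$. If $Y\subseteq X$ is an irreducible component, then its unique supporting fixed point $\min(Y)$ is also a supporting fixed point of $X$. In particular, for every $f\in X^T$, every irreducible component of $\overline{X_f}$ contains $f$.
   Context: For a closed $S$-invariant subset $Z\subseteq X$ and $f\in Z^T$, $Z_f=\{z\in Z:\lim_{t\to0}S(t)\cdot z=f\}$ is the B-B stratum. A point $f\in Z^T$ is a supporting fixed point of $Z$ if $Z_f$ contains a nonempty open subset of $Z$. An irreducible $Y$ has exactly one supporting fixed point, denoted $\min(Y)$. *)

theory Defs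
  imports Main "HOL-Computational_Algebra.Polynomial"
begin

definition alg_closed :: "'k::field itself \<Rightarrow> bool" where
  "alg_closed _ \<longleftrightarrow> (\<forall>p :: 'k poly. degree p > 0 \<longrightarrow> (\<exists>x. poly p x = 0))"

definition torus :: "('r \<Rightarrow> 'k::field) set" where
  "torus = {t. \<forall>i. t i \<noteq> 0}"

definition tmul :: "('r \<Rightarrow> 'k::field) \<Rightarrow> ('r \<Rightarrow> 'k) \<Rightarrow> ('r \<Rightarrow> 'k)" where
  "tmul t s = (\<lambda>i. t i * s i)"

definition tone :: "'r \<Rightarrow> 'k::field" where
  "tone = (\<lambda>_. 1)"

inductive_set laurent :: "(('r \<Rightarrow> 'k::field) \<Rightarrow> 'k) set" where
  lconst: "(\<lambda>_. c) \<in> laurent"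
| lvar: "(\<lambda>t. t i) \<in> laurent"
| linv: "(\<lambda>t. inverse (t i)) \<in> laurent"
| ladd: "f \<in> laurent \<Longrightarrow> g \<in> laurent \<Longrightarrow> (\<lambda>t. f t + g t) \<in> laurent"
| lmul: "f \<in> laurent \<Longrightarrow> g \<in> laurent \<Longrightarrow> (\<lambda>t. f t * g t) \<in> laurent"

definition mat_apply :: "('n::finite \<Rightarrow> 'n \<Rightarrow> 'k::field) \<Rightarrow> ('n \<Rightarrow> 'k) \<Rightarrow> ('n \<Rightarrow> 'k)" where
  "mat_apply A x = (\<lambda>i. \<Sum>j\<in>UNIV. A i j * x j)"

definition mat_mul :: "('n::finite \<Rightarrow> 'n \<Rightarrow> 'k::field) \<Rightarrow> ('n \<Rightarrow> 'n \<Rightarrow> 'k) \<Rightarrow> ('n \<Rightarrow> 'n \<Rightarrow> 'k)" where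
  "mat_mul A B = (\<lambda>i j. \<Sum>l\<in>UNIV. A i l * B l j)"

definition mat_id :: "'n \<Rightarrow> 'n \<Rightarrow> 'k::field" where
  "mat_id = (\<lambda>i j. if i = j then 1 else 0)"

text \<open>A linear action of T on V: a homomorphism of algebraic groups T \<rightarrow> GL(V),
  i.e. matrix entries are regular (Laurent polynomial) functions on T and
  the map is multiplicative with rho(1) = id.\<close>
definition torus_rep :: "(('r \<Rightarrow> 'k::field) \<Rightarrow> ('n::finite \<Rightarrow> 'n \<Rightarrow> 'k)) \<Rightarrow> bool" where
  "torus_rep \<rho> \<longleftrightarrow>
     (\<forall>i j. \<exists>g\<in>laurent. \<forall>t\<in>torus. \<rho> t i j = g t) \<and>
     \<rho> tone = mat_id \<and>
     (\<forall>t\<in>torus. \<forall>s\<in>torus. \<rho> (tmul t s) = mat_mul (\<rho> t) (\<rho> s))"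

definition cochar :: "('r \<Rightarrow> int) \<Rightarrow> 'k::field \<Rightarrow> ('r \<Rightarrow> 'k)" where
  "cochar a c = (\<lambda>i. c powi a i)"

inductive_set polyfun :: "(('n \<Rightarrow> 'k::field) \<Rightarrow> 'k) set" where
  pconst: "(\<lambda>_. c) \<in> polyfun"
| pvar: "(\<lambda>x. x i) \<in> polyfun"
| padd: "f \<in> polyfun \<Longrightarrow> g \<in> polyfun \<Longrightarrow> (\<lambda>x. f x + g x) \<in> polyfun"
| pmul: "f \<in> polyfun \<Longrightarrow> g \<in> polyfun \<Longrightarrow> (\<lambda>x. f x * g x) \<in> polyfun"

definition homog :: "nat \<Rightarrow> (('n \<Rightarrow> 'k::field) \<Rightarrow> 'k) \<Rightarrow> bool" where
  "homog d f \<longleftrightarrow> f \<in> polyfun \<and> (\<forall>c x. f (\<lambda>i. c * x i) = c ^ d * f x)"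

definition nonzero_vec :: "('n \<Rightarrow> 'k::field) \<Rightarrow> bool" where
  "nonzero_vec x \<longleftrightarrow> (\<exists>i. x i \<noteq> 0)"

text \<open>The point of PV spanned by a nonzero vector x: the line minus the origin.\<close>
definition line :: "('n \<Rightarrow> 'k::field) \<Rightarrow> ('n \<Rightarrow> 'k) set" where
  "line x = {(\<lambda>i. c * x i) | c. c \<noteq> 0}"

definition PP :: "('n \<Rightarrow> 'k::field) set set" where
  "PP = {line x | x. nonzero_vec x}"

definition zclosed :: "('n \<Rightarrow> 'k::field) set set \<Rightarrow> bool" where
  "zclosed Z \<longleftrightarrow> (\<exists>F. (\<forall>f\<in>F. \<exists>d. homog d f) \<and>
                      Z = {p\<in>PP. \<forall>f\<in>F. \<forall>x\<in>p. f x = 0})"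

definition zopen_in :: "('n \<Rightarrow> 'k::field) set set \<Rightarrow> ('n \<Rightarrow> 'k) set set \<Rightarrow> bool" where
  "zopen_in Z U \<longleftrightarrow> U \<subseteq> Z \<and> zclosed (Z - U)"

definition zclosure :: "('n \<Rightarrow> 'k::field) set set \<Rightarrow> ('n \<Rightarrow> 'k) set set" where
  "zclosure A = \<Inter>{C. zclosed C \<and> A \<subseteq> C}"

definition irreducible_closed :: "('n \<Rightarrow> 'k::field) set set \<Rightarrow> bool" where
  "irreducible_closed Z \<longleftrightarrow> zclosed Z \<and> Z \<noteq> {} \<and>
     (\<forall>A B. zclosed A \<and> zclosed B \<and> Z \<subseteq> A \<union> B \<longrightarrow> Z \<subseteq> A \<or> Z \<subseteq> B)"

definition irr_component :: "('n \<Rightarrow> 'k::field) set set \<Rightarrow> ('n \<Rightarrow> 'k) set set \<Rightarrow> bool" where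
  "irr_component Y X \<longleftrightarrow> Y \<subseteq> X \<and> irreducible_closed Y \<and>
     (\<forall>W. irreducible_closed W \<and> Y \<subseteq> W \<and> W \<subseteq> X \<longrightarrow> W = Y)"

definition act :: "(('r \<Rightarrow> 'k::field) \<Rightarrow> ('n::finite \<Rightarrow> 'n \<Rightarrow> 'k)) \<Rightarrow> ('r \<Rightarrow> 'k)
                   \<Rightarrow> ('n \<Rightarrow> 'k) set \<Rightarrow> ('n \<Rightarrow> 'k) set" where
  "act \<rho> t p = mat_apply (\<rho> t) ` p"

definition T_invariant :: "(('r \<Rightarrow> 'k::field) \<Rightarrow> ('n::finite \<Rightarrow> 'n \<Rightarrow> 'k)) \<Rightarrow> ('n \<Rightarrow> 'k) set set \<Rightarrow> bool" where
  "T_invariant \<rho> X \<longleftrightarrow> (\<forall>t\<in>torus. \<forall>p\<in>X. act \<rho> t p \<in> X)"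

definition T_fixed :: "(('r \<Rightarrow> 'k::field) \<Rightarrow> ('n::finite \<Rightarrow> 'n \<Rightarrow> 'k)) \<Rightarrow> ('n \<Rightarrow> 'k) set set \<Rightarrow> ('n \<Rightarrow> 'k) set set" where
  "T_fixed \<rho> Z = {p\<in>Z. \<forall>t\<in>torus. act \<rho> t p = p}"

definition S_fixed :: "(('r \<Rightarrow> 'k::field) \<Rightarrow> ('n::finite \<Rightarrow> 'n \<Rightarrow> 'k)) \<Rightarrow> ('r \<Rightarrow> int)
                       \<Rightarrow> ('n \<Rightarrow> 'k) set set \<Rightarrow> ('n \<Rightarrow> 'k) set set" where
  "S_fixed \<rho> a Z = {p\<in>Z. \<forall>c. c \<noteq> 0 \<longrightarrow> act \<rho> (cochar a c) p = p}"

text \<open>lim_{c \<rightarrow> 0} S(c) z = f: the orbit map G_m \<rightarrow> PV, c \<mapsto> S(c) z, extends to a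
  morphism A^1 \<rightarrow> PV sending 0 to f.  Morphisms A^1 \<rightarrow> PV are given by tuples of
  univariate polynomials without common zero.\<close>
definition bb_limit :: "(('r \<Rightarrow> 'k::field) \<Rightarrow> ('n::finite \<Rightarrow> 'n \<Rightarrow> 'k)) \<Rightarrow> ('r \<Rightarrow> int)
                        \<Rightarrow> ('n \<Rightarrow> 'k) set \<Rightarrow> ('n \<Rightarrow> 'k) set \<Rightarrow> bool" where
  "bb_limit \<rho> a z f \<longleftrightarrow>
     (\<exists>\<phi> :: 'n \<Rightarrow> 'k poly.
        nonzero_vec (\<lambda>i. poly (\<phi> i) 0) \<and> line (\<lambda>i. poly (\<phi> i) 0) = f \<and>
        (\<forall>c. c \<noteq> 0 \<longrightarrow> nonzero_vec (\<lambda>i. poly (\<phi> i) c) \<and>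
                         line (\<lambda>i. poly (\<phi> i) c) = act \<rho> (cochar a c) z))"

definition bb_stratum :: "(('r \<Rightarrow> 'k::field) \<Rightarrow> ('n::finite \<Rightarrow> 'n \<Rightarrow> 'k)) \<Rightarrow> ('r \<Rightarrow> int)
                          \<Rightarrow> ('n \<Rightarrow> 'k) set set \<Rightarrow> ('n \<Rightarrow> 'k) set \<Rightarrow> ('n \<Rightarrow> 'k) set set" where
  "bb_stratum \<rho> a Z f = {z\<in>Z. bb_limit \<rho> a z f}"

definition supporting_fp :: "(('r \<Rightarrow> 'k::field) \<Rightarrow> ('n::finite \<Rightarrow> 'n \<Rightarrow> 'k)) \<Rightarrow> ('r \<Rightarrow> int)
                             \<Rightarrow> ('n \<Rightarrow> 'k) set set \<Rightarrow> ('n \<Rightarrow> 'k) set \<Rightarrow> bool" where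
  "supporting_fp \<rho> a Z f \<longleftrightarrow> f \<in> T_fixed \<rho> Z \<and>
     (\<exists>U. U \<noteq> {} \<and> zopen_in Z U \<and> U \<subseteq> bb_stratum \<rho> a Z f)"

end

theory Submission
  imports Defs "HOL-Library.Function_Algebras"
begin

text \<open>
  Everything rests on the Zariski topology of PV being Noetherian, which follows from Hilbert's
  basis theorem (proved below for subrings of a commutative ring and iterated over the
  coordinates). Hence a closed set is a finite union of irreducible closed sets, and an
  irreducible component Y of a closed set X has a closed C (the union of the other components)
  with X = Y \<union> C and Y not contained in C.

  For the first claim, remove C from a nonempty open subset of Y contained in the stratum Y_f;
  by irreducibility of Y the result is still nonempty, and it is open in X.

  For the second claim, write the closure of X_f as Y \<union> C and choose z \<in> X_f outside C. The
  orbit S(c)z stays in X_f and extends to a polynomial curve through f at c = 0. Only finitely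
  many parameters land in C, so infinitely many, hence all, land in the closed set Y; in
  particular f \<in> Y. Neither claim uses the hypotheses on the fixed points, and algebraic
  closedness is only used to know that the field is infinite.
\<close>

section \<open>Noetherian rings and Hilbert's basis theorem\<close>

inductive_set span_over :: "'a::comm_ring_1 set \<Rightarrow> 'a set \<Rightarrow> 'a set" for R S where
  span_over_0: "0 \<in> span_over R S"
| span_over_base: "s \<in> S \<Longrightarrow> s \<in> span_over R S"
| span_over_add: "x \<in> span_over R S \<Longrightarrow> y \<in> span_over R S \<Longrightarrow> x + y \<in> span_over R S"
| span_over_mult: "r \<in> R \<Longrightarrow> x \<in> span_over R S \<Longrightarrow> r * x \<in> span_over R S"

definition subring :: "'a::comm_ring_1 set \<Rightarrow> bool" where
  "subring R \<longleftrightarrow> 0 \<in> R \<and> 1 \<in> R \<and> (\<forall>x\<in>R. \<forall>y\<in>R. x + y \<in> R \<and> x * y \<in> R \<and> - x \<in> R)"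

text \<open>Every ideal of R is finitely generated, phrased for arbitrary subsets of R so that no
  separate notion of ideal is needed.\<close>
definition noetherian :: "'a::comm_ring_1 set \<Rightarrow> bool" where
  "noetherian R \<longleftrightarrow> (\<forall>S \<subseteq> R. \<exists>S0 \<subseteq> S. finite S0 \<and> S \<subseteq> span_over R S0)"

lemma noetherianD:
  assumes "noetherian R" "S \<subseteq> R"
  shows "\<exists>S0\<subseteq>S. finite S0 \<and> S \<subseteq> span_over R S0"
  using assms(1)[unfolded noetherian_def, rule_format, OF assms(2)] .

lemma span_over_mono: "x \<in> span_over R S \<Longrightarrow> S \<subseteq> T \<Longrightarrow> x \<in> span_over R T"
  by (induction rule: span_over.induct) (auto intro: span_over.intros)

lemma span_over_trans: "x \<in> span_over R T \<Longrightarrow> T \<subseteq> span_over R S \<Longrightarrow> x \<in> span_over R S"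
  by (induction rule: span_over.induct) (auto intro: span_over.intros)

lemma span_over_subset:
  assumes "subring R" "S \<subseteq> R"
  shows "span_over R S \<subseteq> R"
proof
  fix x assume "x \<in> span_over R S"
  then show "x \<in> R" using assms by (induction rule: span_over.induct) (auto simp: subring_def)
qed

lemma span_over_diff:
  assumes "subring R" "x \<in> span_over R S" "y \<in> span_over R S"
  shows "x - y \<in> span_over R S"
proof -
  have "x + (- 1) * y \<in> span_over R S"
    using assms by (intro span_over_add span_over_mult) (auto simp: subring_def)
  then show ?thesis by simp
qed

lemma span_over_finite: "x \<in> span_over R S \<Longrightarrow> \<exists>S0\<subseteq>S. finite S0 \<and> x \<in> span_over R S0"
proof (induction rule: span_over.induct)
  case span_over_0
  show ?case by (auto intro: span_over.span_over_0)
next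
  case (span_over_base s)
  then show ?case by (intro exI[of _ "{s}"]) (auto intro: span_over.span_over_base)
next
  case (span_over_mult r x)
  then show ?case by (auto intro: span_over.span_over_mult)
next
  case (span_over_add x y)
  then obtain A B where "A \<subseteq> S" "finite A" "x \<in> span_over R A" "B \<subseteq> S" "finite B" "y \<in> span_over R B"
    by blast
  then show ?case
    by (intro exI[of _ "A \<union> B"]) (auto intro: span_over.span_over_add span_over_mono)
qed

lemma span_over_finite_subset:
  assumes "finite G" "G \<subseteq> span_over R S"
  shows "\<exists>S0\<subseteq>S. finite S0 \<and> G \<subseteq> span_over R S0"
  using assms
proof (induction G rule: finite_induct)
  case (insert g G)
  then obtain S0 S1 where "S0 \<subseteq> S" "finite S0" "G \<subseteq> span_over R S0"
    and "S1 \<subseteq> S" "finite S1" "g \<in> span_over R S1"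
    using span_over_finite[of g R S] by auto
  then show ?case
    by (intro exI[of _ "S0 \<union> S1"]) (auto intro: span_over_mono)
qed auto

lemma noetherian_chain_stabilizes:
  fixes L :: "nat \<Rightarrow> 'a::comm_ring_1 set"
  assumes "noetherian R" "mono L" "\<And>d. L d \<subseteq> R" "\<And>d. span_over R (L d) \<subseteq> L d"
  shows "\<exists>D. \<forall>d. L d \<subseteq> L D"
proof -
  have "(\<Union>d. L d) \<subseteq> R" using assms(3) by blast
  from noetherianD[OF assms(1) this]
  obtain L0 where L0: "L0 \<subseteq> (\<Union>d. L d)" "finite L0" "(\<Union>d. L d) \<subseteq> span_over R L0"
    by blast
  have "\<forall>x\<in>L0. \<exists>d. x \<in> L d" using L0(1) by blast
  then obtain idx where idx: "\<forall>x\<in>L0. x \<in> L (idx x)" by (auto dest!: bchoice)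
  define D where "D = Max (idx ` L0)"
  have "L0 \<subseteq> L D"
  proof
    fix x assume "x \<in> L0"
    then have "idx x \<le> D" unfolding D_def using L0(2) by simp
    then show "x \<in> L D" using idx \<open>x \<in> L0\<close> monoD[OF assms(2)] by blast
  qed
  have "L d \<subseteq> L D" for d
  proof
    fix x assume "x \<in> L d"
    then have "x \<in> span_over R L0" using L0(3) by blast
    then have "x \<in> span_over R (L D)" using \<open>L0 \<subseteq> L D\<close> by (rule span_over_mono)
    then show "x \<in> L D" using assms(4) by blast
  qed
  then show ?thesis by blast
qed

lemma noetherian_image:
  assumes "noetherian A" "subring A" "h 0 = 0"
    and hom_add: "\<And>x y. x \<in> A \<Longrightarrow> y \<in> A \<Longrightarrow> h (x + y) = h x + h y"
    and hom_mult: "\<And>x y. x \<in> A \<Longrightarrow> y \<in> A \<Longrightarrow> h (x * y) = h x * h y"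
  shows "noetherian (h ` A)"
  unfolding noetherian_def
proof (intro allI impI)
  fix T assume T: "T \<subseteq> h ` A"
  define T' where "T' = {x \<in> A. h x \<in> T}"
  have "T' \<subseteq> A" by (auto simp: T'_def)
  from noetherianD[OF assms(1) this]
  obtain T0 where T0: "T0 \<subseteq> T'" "finite T0" "T' \<subseteq> span_over A T0" by blast
  have T0A: "T0 \<subseteq> A" using T0(1) by (auto simp: T'_def)
  have span_image: "x \<in> A \<and> h x \<in> span_over (h ` A) (h ` T0)" if "x \<in> span_over A T0" for x
    using that
  proof (induction rule: span_over.induct)
    case span_over_0
    show ?case using assms(2,3) by (simp add: subring_def span_over.span_over_0)
  next
    case (span_over_base s)
    then show ?case using T0A by (auto intro: span_over.span_over_base)
  next
    case (span_over_add x y)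
    then show ?case using assms(2) hom_add[of x y] by (simp add: subring_def span_over.span_over_add)
  next
    case (span_over_mult r x)
    then show ?case using assms(2) hom_mult[of r x] by (simp add: subring_def span_over.span_over_mult)
  qed
  have "T \<subseteq> span_over (h ` A) (h ` T0)"
  proof
    fix t assume "t \<in> T"
    then obtain x where "x \<in> T'" "t = h x" using T by (auto simp: T'_def)
    then show "t \<in> span_over (h ` A) (h ` T0)" using T0(3) span_image by blast
  qed
  moreover have "h ` T0 \<subseteq> T" using T0(1) by (auto simp: T'_def)
  ultimately show "\<exists>S0\<subseteq>T. finite S0 \<and> T \<subseteq> span_over (h ` A) S0" using T0(2) by blast
qed

lemma noetherian_if_nonzero_invertible:
  assumes "subring R" and inv: "\<And>x. x \<in> R \<Longrightarrow> x \<noteq> 0 \<Longrightarrow> \<exists>y\<in>R. y * x = 1"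
  shows "noetherian R"
  unfolding noetherian_def
proof (intro allI impI)
  fix S assume S: "S \<subseteq> R"
  show "\<exists>S0\<subseteq>S. finite S0 \<and> S \<subseteq> span_over R S0"
  proof (cases "S \<subseteq> {0}")
    case True
    then show ?thesis by (intro exI[of _ "{}"]) (auto intro: span_over_0)
  next
    case False
    then obtain s where s: "s \<in> S" "s \<noteq> 0" by blast
    then obtain y where y: "y \<in> R" "y * s = 1" using S inv by blast
    have "t \<in> span_over R {s}" if "t \<in> S" for t
    proof -
      have "(t * y) * s \<in> span_over R {s}"
        using that S y(1) \<open>subring R\<close> by (intro span_over_mult span_over_base) (auto simp: subring_def)
      then show ?thesis using y(2) by (simp add: mult.assoc)
    qed
    then show ?thesis using s(1) by (intro exI[of _ "{s}"]) auto
  qed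
qed

definition polys_over :: "'a::comm_ring_1 set \<Rightarrow> 'a poly set" where
  "polys_over R = {p. \<forall>i. coeff p i \<in> R}"

lemma sum_in_subring: "finite A \<Longrightarrow> subring R \<Longrightarrow> (\<And>i. i \<in> A \<Longrightarrow> f i \<in> R) \<Longrightarrow> sum f A \<in> R"
  by (induction A rule: finite_induct) (auto simp: subring_def)

lemma subring_polys_over:
  assumes "subring R" shows "subring (polys_over R)"
proof -
  have "coeff (p * q) i \<in> R" if "p \<in> polys_over R" "q \<in> polys_over R" for p q i
    unfolding coeff_mult using that assms
    by (intro sum_in_subring) (auto simp: polys_over_def subring_def)
  then show ?thesis using assms unfolding subring_def polys_over_def
    by (auto simp: coeff_1)
qed

lemma const_in_polys_over: "subring R \<Longrightarrow> r \<in> R \<Longrightarrow> [:r:] \<in> polys_over R"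
  by (auto simp: polys_over_def coeff_pCons subring_def split: nat.split)

lemma monom_in_polys_over: "subring R \<Longrightarrow> monom 1 k \<in> polys_over R"
  by (auto simp: polys_over_def coeff_monom subring_def)

definition lead_coeffs :: "'a::comm_ring_1 poly set \<Rightarrow> nat \<Rightarrow> 'a set" where
  "lead_coeffs I d = {coeff p d | p. p \<in> I \<and> degree p \<le> d}"

lemma lead_coeffs_span_closed:
  fixes S :: "'a::comm_ring_1 poly set"
  assumes "subring R"
  defines "I \<equiv> span_over (polys_over R) S"
  shows "span_over R (lead_coeffs I d) \<subseteq> lead_coeffs I d"
proof
  fix c assume "c \<in> span_over R (lead_coeffs I d)"
  then show "c \<in> lead_coeffs I d"
  proof (induction rule: span_over.induct)
    case span_over_0
    show ?case unfolding lead_coeffs_def I_def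
      by (intro CollectI exI[of _ 0]) (auto intro: span_over.span_over_0)
  next
    case (span_over_add x y)
    then obtain p q where "x = coeff p d" "p \<in> I" "degree p \<le> d" "y = coeff q d" "q \<in> I" "degree q \<le> d"
      unfolding lead_coeffs_def by blast
    then show ?case unfolding lead_coeffs_def I_def
      by (intro CollectI exI[of _ "p + q"]) (auto intro: span_over.span_over_add degree_add_le)
  next
    case (span_over_mult r x)
    then obtain p where "x = coeff p d" "p \<in> I" "degree p \<le> d"
      unfolding lead_coeffs_def by blast
    moreover have "[:r:] * p \<in> I"
      using span_over_mult(1) \<open>p \<in> I\<close> assms(1) unfolding I_def
      by (intro span_over.span_over_mult const_in_polys_over)
    ultimately show ?case unfolding lead_coeffs_def
      by (intro CollectI exI[of _ "[:r:] * p"]) (auto intro: order_trans[OF degree_smult_le])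
  qed
qed

lemma lead_coeffs_Suc:
  fixes S :: "'a::comm_ring_1 poly set"
  assumes "subring R"
  defines "I \<equiv> span_over (polys_over R) S"
  shows "lead_coeffs I d \<subseteq> lead_coeffs I (Suc d)"
proof
  fix c assume "c \<in> lead_coeffs I d"
  then obtain p where p: "c = coeff p d" "p \<in> I" "degree p \<le> d"
    unfolding lead_coeffs_def by blast
  have "monom 1 1 * p \<in> I"
    using p(2) assms(1) unfolding I_def by (intro span_over.span_over_mult monom_in_polys_over)
  moreover have "monom 1 1 * p = pCons 0 p" by (simp add: monom_Suc)
  moreover have "degree (pCons 0 p) \<le> Suc d"
    using p(3) degree_pCons_le[of 0 p] by linarith
  ultimately show "c \<in> lead_coeffs I (Suc d)" unfolding lead_coeffs_def
    using p(1) by (intro CollectI exI[of _ "pCons 0 p"]) auto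
qed

lemma lead_coeff_span_lift:
  assumes "subring R" "c \<in> span_over R M"
    and "\<And>m. m \<in> M \<Longrightarrow> \<exists>p\<in>G. degree p \<le> d \<and> coeff p d = m"
  shows "\<exists>q\<in>span_over (polys_over R) G. degree q \<le> d \<and> coeff q d = c"
  using assms(2)
proof (induction rule: span_over.induct)
  case span_over_0
  show ?case by (intro bexI[of _ 0]) (auto intro: span_over.span_over_0)
next
  case (span_over_base m)
  then show ?case using assms(3) by (blast intro: span_over.span_over_base)
next
  case (span_over_add x y)
  then obtain q1 q2 where "q1 \<in> span_over (polys_over R) G" "degree q1 \<le> d" "coeff q1 d = x"
    "q2 \<in> span_over (polys_over R) G" "degree q2 \<le> d" "coeff q2 d = y" by blast
  then show ?case
    by (intro bexI[of _ "q1 + q2"]) (auto intro: span_over.span_over_add degree_add_le)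
next
  case (span_over_mult r x)
  then obtain q where q: "q \<in> span_over (polys_over R) G" "degree q \<le> d" "coeff q d = x" by blast
  have "[:r:] * q \<in> span_over (polys_over R) G"
    using const_in_polys_over[OF assms(1) span_over_mult(1)] q(1) by (rule span_over.span_over_mult)
  then show ?case using q(2,3)
    by (intro bexI[of _ "[:r:] * q"]) (auto intro: order_trans[OF degree_smult_le])
qed

lemma lead_coeff_shift:
  assumes "subring R" "q \<in> span_over (polys_over R) G" "degree q \<le> d" "d \<le> N"
  shows "\<exists>q'\<in>span_over (polys_over R) G. degree q' \<le> N \<and> coeff q' N = coeff q d"
proof (intro bexI conjI)
  show "monom 1 (N - d) * q \<in> span_over (polys_over R) G"
    using monom_in_polys_over[OF assms(1)] assms(2) by (rule span_over.span_over_mult)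
  have "degree (monom (1::'a) (N - d)) \<le> N - d" by (rule degree_monom_le)
  then show "degree (monom 1 (N - d) * q) \<le> N"
    using degree_mult_le[of "monom 1 (N - d)" q] assms(3,4) by arith
  show "coeff (monom 1 (N - d) * q) N = coeff q d"
    using assms(4) by (simp add: coeff_monom_mult)
qed

lemma lead_coeffs_finite_lift:
  assumes R: "subring R" "noetherian R"
    and "\<And>d. lead_coeffs I d \<subseteq> R" and stable: "\<And>d. lead_coeffs I d \<subseteq> lead_coeffs I D"
  shows "\<exists>G\<subseteq>I. finite G \<and>
           (\<forall>d. \<forall>c\<in>lead_coeffs I d. \<exists>q\<in>span_over (polys_over R) G. degree q \<le> d \<and> coeff q d = c)"
proof -
  define M where "M d = (SOME M. M \<subseteq> lead_coeffs I d \<and> finite M \<and> lead_coeffs I d \<subseteq> span_over R M)"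
    for d
  have M: "M d \<subseteq> lead_coeffs I d \<and> finite (M d) \<and> lead_coeffs I d \<subseteq> span_over R (M d)" for d
    unfolding M_def using noetherianD[OF R(2) assms(3)] by (rule someI_ex)
  then have M_sub: "M d \<subseteq> lead_coeffs I d" and M_fin: "finite (M d)"
    and M_span: "lead_coeffs I d \<subseteq> span_over R (M d)" for d
    by blast+
  define P where "P d m = (SOME p. p \<in> I \<and> degree p \<le> d \<and> coeff p d = m)" for d m
  have P: "P d m \<in> I \<and> degree (P d m) \<le> d \<and> coeff (P d m) d = m" if m: "m \<in> M d" for d m
  proof -
    obtain p where "p \<in> I \<and> degree p \<le> d \<and> coeff p d = m"
      using M_sub m unfolding lead_coeffs_def by blast
    then show ?thesis unfolding P_def by (rule someI)
  qed
  define G where "G = (\<Union>d\<in>{..D}. P d ` M d)"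
  have low: "\<exists>q\<in>span_over (polys_over R) G. degree q \<le> d \<and> coeff q d = c"
    if "d \<le> D" "c \<in> lead_coeffs I d" for d c
  proof (rule lead_coeff_span_lift[OF R(1)])
    show "c \<in> span_over R (M d)" using M_span that(2) by blast
    show "\<exists>p\<in>G. degree p \<le> d \<and> coeff p d = m" if "m \<in> M d" for m
      using P[OF that] \<open>m \<in> M d\<close> \<open>d \<le> D\<close> unfolding G_def by blast
  qed
  have "\<exists>q\<in>span_over (polys_over R) G. degree q \<le> d \<and> coeff q d = c"
    if c: "c \<in> lead_coeffs I d" for d c
  proof (cases "d \<le> D")
    case True
    then show ?thesis using low c by blast
  next
    case False
    then obtain q where "q \<in> span_over (polys_over R) G" "degree q \<le> D" "coeff q D = c"
      using low[of D c] stable c by blast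
    then show ?thesis using lead_coeff_shift[OF R(1), of q G D d] False by auto
  qed
  moreover have "G \<subseteq> I" using P unfolding G_def by blast
  moreover have "finite G" using M_fin unfolding G_def by blast
  ultimately show ?thesis by blast
qed

lemma span_polys_by_lead_coeffs:
  fixes S :: "'a::comm_ring_1 poly set"
  assumes R: "subring R"
  defines "I \<equiv> span_over (polys_over R) S"
  assumes "G \<subseteq> I"
    and lift: "\<And>d c. c \<in> lead_coeffs I d \<Longrightarrow> \<exists>q\<in>span_over (polys_over R) G. degree q \<le> d \<and> coeff q d = c"
  shows "I \<subseteq> span_over (polys_over R) G"
proof
  fix p assume "p \<in> I"
  then show "p \<in> span_over (polys_over R) G"
  proof (induction "degree p" arbitrary: p rule: less_induct)
    case less
    obtain q where q: "q \<in> span_over (polys_over R) G" "degree q \<le> degree p"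
      "coeff q (degree p) = lead_coeff p"
      using lift[of "lead_coeff p" "degree p"] less.prems unfolding lead_coeffs_def by blast
    have "q \<in> I" using q(1) \<open>G \<subseteq> I\<close> unfolding I_def by (rule span_over_trans)
    then have "p - q \<in> I" using less.prems R unfolding I_def by (intro span_over_diff subring_polys_over)
    have "p - q \<in> span_over (polys_over R) G"
    proof (cases "p - q = 0")
      case False
      have "degree (p - q) \<le> degree p" using q(2) by (intro degree_diff_le) auto
      moreover have "coeff (p - q) (degree p) = 0" using q(3) by simp
      ultimately have "degree (p - q) < degree p"
        using False by (metis leading_coeff_0_iff order_less_le)
      then show ?thesis using \<open>p - q \<in> I\<close> by (rule less.hyps)
    qed (auto intro: span_over_0)
    then have "(p - q) + q \<in> span_over (polys_over R) G" using q(1) by (rule span_over_add)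
    then show ?case by simp
  qed
qed

theorem noetherian_polys_over:
  assumes "subring R" "noetherian R"
  shows "noetherian (polys_over R)"
  unfolding noetherian_def
proof (intro allI impI)
  fix S assume "S \<subseteq> polys_over R"
  define I where "I = span_over (polys_over R) S"
  have "I \<subseteq> polys_over R"
    using span_over_subset[OF subring_polys_over[OF assms(1)] \<open>S \<subseteq> polys_over R\<close>] by (simp add: I_def)
  then have L_R: "lead_coeffs I d \<subseteq> R" for d by (auto simp: lead_coeffs_def polys_over_def)
  have mono: "mono (lead_coeffs I)"
    unfolding mono_iff_le_Suc I_def using lead_coeffs_Suc[OF assms(1)] by blast
  have closed: "span_over R (lead_coeffs I d) \<subseteq> lead_coeffs I d" for d
    unfolding I_def by (rule lead_coeffs_span_closed[OF assms(1)])
  obtain D where "\<And>d. lead_coeffs I d \<subseteq> lead_coeffs I D"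
    using noetherian_chain_stabilizes[OF assms(2) mono L_R closed] by blast
  from lead_coeffs_finite_lift[OF assms L_R this]
  obtain G where G: "G \<subseteq> I" "finite G"
    and lift: "\<forall>d. \<forall>c\<in>lead_coeffs I d. \<exists>q\<in>span_over (polys_over R) G. degree q \<le> d \<and> coeff q d = c"
    by blast
  have I_G: "I \<subseteq> span_over (polys_over R) G"
    unfolding I_def
  proof (rule span_polys_by_lead_coeffs[OF assms(1)])
    show "G \<subseteq> span_over (polys_over R) S" using G(1) unfolding I_def .
    show "\<exists>q\<in>span_over (polys_over R) G. degree q \<le> d \<and> coeff q d = c"
      if "c \<in> lead_coeffs (span_over (polys_over R) S) d" for d c
      using lift that unfolding I_def by blast
  qed
  from span_over_finite_subset[OF G(2) G(1)[unfolded I_def]]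
  obtain S0 where S0: "S0 \<subseteq> S" "finite S0" "G \<subseteq> span_over (polys_over R) S0"
    by blast
  have "S \<subseteq> span_over (polys_over R) S0"
  proof
    fix s assume "s \<in> S"
    then have "s \<in> span_over (polys_over R) G" using I_G unfolding I_def by (auto intro: span_over_base)
    then show "s \<in> span_over (polys_over R) S0" using S0(3) by (rule span_over_trans)
  qed
  then show "\<exists>S0\<subseteq>S. finite S0 \<and> S \<subseteq> span_over (polys_over R) S0" using S0(1,2) by blast
qed

section \<open>Polynomial functions in finitely many variables\<close>

definition adjoin :: "'a::comm_ring_1 set \<Rightarrow> 'a \<Rightarrow> 'a set" where
  "adjoin R x = (\<lambda>p. poly p x) ` polys_over R"

lemma subring_adjoin:
  assumes "subring R" shows "subring (adjoin R x)"
proof -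
  have P: "subring (polys_over R)" using assms by (rule subring_polys_over)
  show ?thesis
    unfolding subring_def adjoin_def
  proof (intro conjI ballI)
    show "0 \<in> (\<lambda>p. poly p x) ` polys_over R" "1 \<in> (\<lambda>p. poly p x) ` polys_over R"
      using P by (force simp: subring_def)+
  next
    fix a b assume "a \<in> (\<lambda>p. poly p x) ` polys_over R" "b \<in> (\<lambda>p. poly p x) ` polys_over R"
    then obtain p q where "p \<in> polys_over R" "q \<in> polys_over R" "a = poly p x" "b = poly q x" by blast
    moreover have "p + q \<in> polys_over R" "p * q \<in> polys_over R" "- p \<in> polys_over R"
      using P \<open>p \<in> polys_over R\<close> \<open>q \<in> polys_over R\<close> unfolding subring_def by blast+
    ultimately show "a + b \<in> (\<lambda>p. poly p x) ` polys_over R" "a * b \<in> (\<lambda>p. poly p x) ` polys_over R"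
      "- a \<in> (\<lambda>p. poly p x) ` polys_over R"
      by (auto intro: image_eqI[of _ _ "p + q"] image_eqI[of _ _ "p * q"] image_eqI[of _ _ "- p"])
  qed
qed

lemma subset_adjoin: "subring R \<Longrightarrow> R \<subseteq> adjoin R x"
  unfolding adjoin_def by (auto intro!: image_eqI[of _ _ "[:_:]"] const_in_polys_over)

lemma generator_in_adjoin: "subring R \<Longrightarrow> x \<in> adjoin R x"
  unfolding adjoin_def
  by (intro image_eqI[of _ _ "monom 1 1"] monom_in_polys_over) (auto simp: poly_monom)

lemma noetherian_adjoin:
  assumes "subring R" "noetherian R" shows "noetherian (adjoin R x)"
  unfolding adjoin_def
  using noetherian_polys_over[OF assms] subring_polys_over[OF assms(1)]
  by (rule noetherian_image) auto

inductive_set polyfun_in :: "'n set \<Rightarrow> (('n \<Rightarrow> 'k::field) \<Rightarrow> 'k) set" for V where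
  polyfun_in_const: "(\<lambda>_. c) \<in> polyfun_in V"
| polyfun_in_var: "i \<in> V \<Longrightarrow> (\<lambda>x. x i) \<in> polyfun_in V"
| polyfun_in_add: "f \<in> polyfun_in V \<Longrightarrow> g \<in> polyfun_in V \<Longrightarrow> f + g \<in> polyfun_in V"
| polyfun_in_mult: "f \<in> polyfun_in V \<Longrightarrow> g \<in> polyfun_in V \<Longrightarrow> f * g \<in> polyfun_in V"

lemma polyfun_eq_polyfun_in_UNIV: "polyfun = polyfun_in UNIV"
proof (intro equalityI subsetI)
  fix f :: "('a \<Rightarrow> 'b) \<Rightarrow> 'b" assume "f \<in> polyfun"
  then show "f \<in> polyfun_in UNIV"
  proof (induction rule: polyfun.induct)
    case (padd f g)
    then show ?case using polyfun_in_add[of f UNIV g] by (simp add: plus_fun_def)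
  next
    case (pmul f g)
    then show ?case using polyfun_in_mult[of f UNIV g] by (simp add: times_fun_def)
  qed (auto intro: polyfun_in_const polyfun_in_var)
next
  fix f :: "('a \<Rightarrow> 'b) \<Rightarrow> 'b" assume "f \<in> polyfun_in UNIV"
  then show "f \<in> polyfun"
  proof (induction rule: polyfun_in.induct)
    case (polyfun_in_add f g)
    then show ?case using padd[of f g] by (simp add: plus_fun_def)
  next
    case (polyfun_in_mult f g)
    then show ?case using pmul[of f g] by (simp add: times_fun_def)
  qed (auto intro: pconst pvar)
qed

lemma subring_polyfun_in: "subring (polyfun_in V)"
proof -
  have "- f \<in> polyfun_in V" if "f \<in> polyfun_in V" for f
  proof -
    have "(\<lambda>_. -1) * f \<in> polyfun_in V" using that by (intro polyfun_in_mult polyfun_in_const)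
    moreover have "(\<lambda>_. -1) * f = - f" by (simp add: fun_eq_iff)
    ultimately show ?thesis by simp
  qed
  moreover have "0 \<in> polyfun_in V" "1 \<in> polyfun_in V"
    using polyfun_in_const[of 0] polyfun_in_const[of 1] by (simp_all add: zero_fun_def one_fun_def)
  ultimately show ?thesis
    unfolding subring_def using polyfun_in_add polyfun_in_mult by blast
qed

lemma polyfun_in_mono: "f \<in> polyfun_in V \<Longrightarrow> V \<subseteq> W \<Longrightarrow> f \<in> polyfun_in W"
  by (induction rule: polyfun_in.induct)
    (auto intro: polyfun_in_const polyfun_in_var polyfun_in_add polyfun_in_mult)

lemma poly_in_polyfun_in_insert:
  "p \<in> polys_over (polyfun_in V) \<Longrightarrow> poly p (\<lambda>x. x v) \<in> polyfun_in (insert v V)"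
proof (induction p rule: pCons_induct)
  case 0
  then show ?case using polyfun_in_const[of 0] by (simp add: zero_fun_def)
next
  case (pCons a p)
  have "coeff (pCons a p) 0 \<in> polyfun_in V" "\<forall>i. coeff (pCons a p) (Suc i) \<in> polyfun_in V"
    using pCons.prems unfolding polys_over_def by blast+
  then have "a \<in> polyfun_in (insert v V)" "p \<in> polys_over (polyfun_in V)"
    by (auto simp: polys_over_def intro: polyfun_in_mono)
  then show ?case
    unfolding poly_pCons using pCons.IH polyfun_in_var[of v "insert v V"]
    by (intro polyfun_in_add polyfun_in_mult) auto
qed

lemma polyfun_in_insert: "polyfun_in (insert v V) = adjoin (polyfun_in V) (\<lambda>x. x v)"
proof (intro equalityI subsetI)
  have R: "subring (polyfun_in V)" by (rule subring_polyfun_in)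
  fix f assume "f \<in> polyfun_in (insert v V)"
  then show "f \<in> adjoin (polyfun_in V) (\<lambda>x. x v)"
  proof (induction rule: polyfun_in.induct)
    case (polyfun_in_const c)
    then show ?case using subset_adjoin[OF R] polyfun_in.polyfun_in_const by blast
  next
    case (polyfun_in_var i)
    then show ?case
      using generator_in_adjoin[OF R] subset_adjoin[OF R] polyfun_in.polyfun_in_var[of i V] by auto
  next
    case (polyfun_in_add f g)
    then show ?case using subring_adjoin[OF R] unfolding subring_def by blast
  next
    case (polyfun_in_mult f g)
    then show ?case using subring_adjoin[OF R] unfolding subring_def by blast
  qed
next
  fix f assume "f \<in> adjoin (polyfun_in V) (\<lambda>x. x v)"
  then show "f \<in> polyfun_in (insert v V)"
    unfolding adjoin_def by (auto intro: poly_in_polyfun_in_insert)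
qed

lemma noetherian_polyfun_in: "finite V \<Longrightarrow> noetherian (polyfun_in V :: (('n \<Rightarrow> 'k::field) \<Rightarrow> 'k) set)"
proof (induction V rule: finite_induct)
  case empty
  have const: "\<exists>c. f = (\<lambda>_. c)" if "f \<in> (polyfun_in {} :: (('n \<Rightarrow> 'k) \<Rightarrow> 'k) set)" for f
    using that by (induction rule: polyfun_in.induct) auto
  show ?case
    using subring_polyfun_in
  proof (rule noetherian_if_nonzero_invertible)
    fix f :: "('n \<Rightarrow> 'k) \<Rightarrow> 'k" assume "f \<in> polyfun_in {}" "f \<noteq> 0"
    then obtain c where "f = (\<lambda>_. c)" "c \<noteq> 0" using const by (auto simp: zero_fun_def)
    then show "\<exists>g\<in>polyfun_in {}. g * f = 1"
      by (intro bexI[of _ "\<lambda>_. inverse c"] polyfun_in_const) (simp add: fun_eq_iff)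
  qed
next
  case (insert v V)
  show ?case unfolding polyfun_in_insert using subring_polyfun_in insert.IH by (rule noetherian_adjoin)
qed

lemma polyfun_common_zeros_finite:
  fixes F :: "(('n::finite \<Rightarrow> 'k::field) \<Rightarrow> 'k) set"
  assumes "F \<subseteq> polyfun"
  shows "\<exists>F0\<subseteq>F. finite F0 \<and> (\<forall>x. (\<forall>f\<in>F0. f x = 0) \<longrightarrow> (\<forall>f\<in>F. f x = 0))"
proof -
  have "noetherian (polyfun :: (('n \<Rightarrow> 'k) \<Rightarrow> 'k) set)"
    unfolding polyfun_eq_polyfun_in_UNIV by (rule noetherian_polyfun_in) simp
  from noetherianD[OF this assms]
  obtain F0 where F0: "F0 \<subseteq> F" "finite F0" "F \<subseteq> span_over polyfun F0" by blast
  have vanish: "g x = 0" if "g \<in> span_over polyfun F0" "\<forall>f\<in>F0. f x = 0" for g x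
    using that by (induction rule: span_over.induct) auto
  have "\<forall>f\<in>F. f x = 0" if "\<forall>f\<in>F0. f x = 0" for x
  proof
    fix f assume "f \<in> F"
    then show "f x = 0" using F0(3) vanish[OF _ that] by blast
  qed
  then show ?thesis using F0(1,2) by blast
qed

section \<open>The Zariski topology of PV\<close>

lemma line_mem: "y \<in> line y"
  unfolding line_def by (rule CollectI, rule exI[of _ 1]) simp

lemma homog_vanishes_on_line_iff:
  assumes "homog d f"
  shows "(\<forall>x\<in>line y. f x = 0) \<longleftrightarrow> f y = 0"
proof
  show "f y = 0" if "\<forall>x\<in>line y. f x = 0" using that line_mem by blast
  show "\<forall>x\<in>line y. f x = 0" if "f y = 0"
    using that assms unfolding line_def homog_def by auto
qed

definition zero_locus :: "(('n \<Rightarrow> 'k::field) \<Rightarrow> 'k) set \<Rightarrow> ('n \<Rightarrow> 'k) set set" where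
  "zero_locus F = {p\<in>PP. \<forall>f\<in>F. \<forall>x\<in>p. f x = 0}"

lemma zclosed_iff: "zclosed Z \<longleftrightarrow> (\<exists>F. (\<forall>f\<in>F. \<exists>d. homog d f) \<and> Z = zero_locus F)"
  unfolding zclosed_def zero_locus_def ..

lemma zero_locus_UN: "I \<noteq> {} \<Longrightarrow> zero_locus (\<Union>i\<in>I. F i) = (\<Inter>i\<in>I. zero_locus (F i))"
  unfolding zero_locus_def by blast

lemma zclosed_subset_PP: "zclosed Z \<Longrightarrow> Z \<subseteq> PP"
  unfolding zclosed_iff zero_locus_def by blast

lemma zclosed_PP: "zclosed PP"
  unfolding zclosed_iff zero_locus_def by (intro exI[of _ "{}"]) auto

lemma zclosed_empty: "zclosed ({} :: ('n \<Rightarrow> 'k::field) set set)"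
  unfolding zclosed_iff
proof (intro exI[of _ "{\<lambda>_. 1 :: 'k}"] conjI)
  show "\<forall>f\<in>{\<lambda>_. 1 :: 'k}. \<exists>d. homog d f"
    by (auto simp: homog_def intro!: exI[of _ 0] pconst)
  show "{} = zero_locus {\<lambda>_. 1 :: 'k}"
    unfolding zero_locus_def PP_def using line_mem by (auto simp del: line_def)
qed

lemma zclosed_Inter:
  assumes "\<C> \<noteq> {}" "\<And>C. C \<in> \<C> \<Longrightarrow> zclosed C"
  shows "zclosed (\<Inter>\<C>)"
proof -
  have "\<forall>C\<in>\<C>. \<exists>F. (\<forall>f\<in>F. \<exists>d. homog d f) \<and> C = zero_locus F"
    using assms(2) unfolding zclosed_iff by blast
  then obtain F where F: "\<forall>C\<in>\<C>. (\<forall>f\<in>F C. \<exists>d. homog d f) \<and> C = zero_locus (F C)"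
    by (auto dest!: bchoice)
  then have "\<Inter>\<C> = (\<Inter>C\<in>\<C>. zero_locus (F C))" by auto
  also have "\<dots> = zero_locus (\<Union>C\<in>\<C>. F C)" using assms(1) by (rule zero_locus_UN[symmetric])
  finally have "\<Inter>\<C> = zero_locus (\<Union>C\<in>\<C>. F C)" .
  moreover have "\<forall>f\<in>(\<Union>C\<in>\<C>. F C). \<exists>d. homog d f" using F by blast
  ultimately show ?thesis unfolding zclosed_iff by blast
qed

lemma zclosed_Int: "zclosed A \<Longrightarrow> zclosed B \<Longrightarrow> zclosed (A \<inter> B)"
  using zclosed_Inter[of "{A, B}"] by auto

lemma homog_mult: "homog d f \<Longrightarrow> homog e g \<Longrightarrow> homog (d + e) (\<lambda>x. f x * g x)"
  unfolding homog_def by (auto intro: pmul simp: power_add)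

lemma zclosed_Un:
  assumes "zclosed A" "zclosed B" shows "zclosed (A \<union> B)"
proof -
  obtain F where F: "\<forall>f\<in>F. \<exists>d. homog d f" "A = zero_locus F"
    using assms(1) unfolding zclosed_iff by blast
  obtain G where G: "\<forall>g\<in>G. \<exists>d. homog d g" "B = zero_locus G"
    using assms(2) unfolding zclosed_iff by blast
  define H where "H = {(\<lambda>x. f x * g x) | f g. f \<in> F \<and> g \<in> G}"
  have "\<forall>h\<in>H. \<exists>d. homog d h"
    unfolding H_def using F(1) G(1) homog_mult by blast
  moreover have "A \<union> B = zero_locus H"
  proof (intro equalityI subsetI)
    fix p assume "p \<in> A \<union> B"
    then show "p \<in> zero_locus H" unfolding H_def F(2) G(2) zero_locus_def by auto
  next
    fix p assume p: "p \<in> zero_locus H"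
    then obtain y where y: "p = line y" unfolding zero_locus_def PP_def by blast
    show "p \<in> A \<union> B"
    proof (rule ccontr)
      assume "p \<notin> A \<union> B"
      then obtain f g where fg: "f \<in> F" "g \<in> G" "\<exists>x\<in>p. f x \<noteq> 0" "\<exists>x\<in>p. g x \<noteq> 0"
        using p unfolding F(2) G(2) zero_locus_def by blast
      then have nz: "f y \<noteq> 0" "g y \<noteq> 0"
        using F(1) G(1) homog_vanishes_on_line_iff y by metis+
      have "(\<lambda>x. f x * g x) \<in> H" unfolding H_def using fg(1,2) by blast
      moreover have "\<forall>h\<in>H. \<forall>x\<in>p. h x = 0" using p unfolding zero_locus_def by blast
      ultimately have "f y * g y = 0" using line_mem[of y] y by fastforce
      then show False using nz by simp
    qed
  qed
  ultimately show ?thesis unfolding zclosed_iff by blast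
qed

lemma zclosed_Union: "finite \<Y> \<Longrightarrow> (\<And>A. A \<in> \<Y> \<Longrightarrow> zclosed A) \<Longrightarrow> zclosed (\<Union>\<Y>)"
  by (induction \<Y> rule: finite_induct) (auto intro: zclosed_empty zclosed_Un)

lemma zclosed_zclosure: "A \<subseteq> PP \<Longrightarrow> zclosed (zclosure A)"
  unfolding zclosure_def by (rule zclosed_Inter) (use zclosed_PP in auto)

definition vanishing :: "('n \<Rightarrow> 'k::field) set set \<Rightarrow> (('n \<Rightarrow> 'k) \<Rightarrow> 'k) set" where
  "vanishing Z = {f \<in> polyfun. \<forall>p\<in>Z. \<forall>x\<in>p. f x = 0}"

lemma zero_locus_antimono: "F \<subseteq> G \<Longrightarrow> zero_locus G \<subseteq> zero_locus F"
  unfolding zero_locus_def by blast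

lemma zclosed_eq_zero_locus_vanishing: "zclosed Z \<Longrightarrow> Z = zero_locus (vanishing Z)"
  unfolding zclosed_iff zero_locus_def vanishing_def homog_def by blast

lemma zclosed_no_strict_descending_chain:
  fixes Z :: "nat \<Rightarrow> ('n::finite \<Rightarrow> 'k::field) set set"
  assumes closed: "\<And>i. zclosed (Z i)" and desc: "\<And>i. Z (Suc i) \<subset> Z i"
  shows False
proof -
  define F where "F = (\<Union>i. vanishing (Z i))"
  have "F \<subseteq> polyfun" unfolding F_def vanishing_def by blast
  from polyfun_common_zeros_finite[OF this]
  obtain F0 where F0: "F0 \<subseteq> F" "finite F0" "\<forall>x. (\<forall>f\<in>F0. f x = 0) \<longrightarrow> (\<forall>f\<in>F. f x = 0)"
    by blast
  have "\<forall>f\<in>F0. \<exists>i. f \<in> vanishing (Z i)" using F0(1) unfolding F_def by blast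
  then obtain idx where idx: "\<forall>f\<in>F0. f \<in> vanishing (Z (idx f))" by (auto dest!: bchoice)
  define N where "N = Max (idx ` F0)"
  have "antimono Z" using desc unfolding antimono_iff_le_Suc by blast
  have F0_N: "F0 \<subseteq> vanishing (Z N)"
  proof
    fix f assume f: "f \<in> F0"
    then have "idx f \<le> N" unfolding N_def using F0(2) by simp
    with \<open>antimono Z\<close> have "Z N \<subseteq> Z (idx f)" by (rule antimonoD)
    then show "f \<in> vanishing (Z N)" using idx f unfolding vanishing_def by blast
  qed
  have "vanishing (Z (Suc N)) \<subseteq> vanishing (Z N)"
  proof
    fix g assume g: "g \<in> vanishing (Z (Suc N))"
    have "g x = 0" if "p \<in> Z N" "x \<in> p" for p x
    proof -
      have "\<forall>f\<in>F0. f x = 0" using F0_N that unfolding vanishing_def by blast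
      moreover have "g \<in> F" using g unfolding F_def by blast
      ultimately show ?thesis using F0(3) by blast
    qed
    then show "g \<in> vanishing (Z N)" using g unfolding vanishing_def by blast
  qed
  then have "Z N \<subseteq> Z (Suc N)"
    using zclosed_eq_zero_locus_vanishing[OF closed[of N]]
      zclosed_eq_zero_locus_vanishing[OF closed[of "Suc N"]] zero_locus_antimono by metis
  then show False using desc[of N] by blast
qed

lemma wf_zclosed_psubset:
  "wf {(A, B). zclosed A \<and> zclosed B \<and> A \<subset> (B :: ('n::finite \<Rightarrow> 'k::field) set set)}"
  unfolding wf_iff_no_infinite_down_chain
proof (intro notI, elim exE)
  fix Z :: "nat \<Rightarrow> ('n \<Rightarrow> 'k) set set"
  assume "\<forall>i. (Z (Suc i), Z i) \<in> {(A, B). zclosed A \<and> zclosed B \<and> A \<subset> B}"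
  then show False by (intro zclosed_no_strict_descending_chain[of Z]) auto
qed

lemma zclosed_irreducible_decomposition:
  fixes Z :: "('n::finite \<Rightarrow> 'k::field) set set"
  assumes "zclosed Z"
  shows "\<exists>\<Y>. finite \<Y> \<and> (\<forall>Y\<in>\<Y>. irreducible_closed Y) \<and> Z = \<Union>\<Y>"
  using wf_zclosed_psubset assms
proof (induction Z rule: wf_induct_rule)
  case (less Z)
  show ?case
  proof (cases "irreducible_closed Z \<or> Z = {}")
    case True
    then show ?thesis by (auto intro: exI[of _ "{Z}"] exI[of _ "{}"])
  next
    case False
    then obtain A B where AB: "zclosed A" "zclosed B" "Z \<subseteq> A \<union> B" "\<not> Z \<subseteq> A" "\<not> Z \<subseteq> B"
      using less.prems unfolding irreducible_closed_def by blast
    have "zclosed (Z \<inter> A)" "zclosed (Z \<inter> B)" using less.prems AB(1,2) by (auto intro: zclosed_Int)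
    then obtain \<A> \<B> where "finite \<A>" "\<forall>Y\<in>\<A>. irreducible_closed Y" "Z \<inter> A = \<Union>\<A>"
      and "finite \<B>" "\<forall>Y\<in>\<B>. irreducible_closed Y" "Z \<inter> B = \<Union>\<B>"
      using less.IH[of "Z \<inter> A"] less.IH[of "Z \<inter> B"] less.prems AB(4,5) by blast
    moreover have "Z = (Z \<inter> A) \<union> (Z \<inter> B)" using AB(3) by blast
    ultimately show ?thesis by (intro exI[of _ "\<A> \<union> \<B>"]) auto
  qed
qed

lemma irreducible_closed_subset_Union:
  assumes "irreducible_closed Y" "finite \<Y>" "\<And>A. A \<in> \<Y> \<Longrightarrow> zclosed A" "Y \<subseteq> \<Union>\<Y>"
  shows "\<exists>A\<in>\<Y>. Y \<subseteq> A"
  using assms(2-4)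
proof (induction \<Y> rule: finite_induct)
  case empty
  then show ?case using assms(1) unfolding irreducible_closed_def by auto
next
  case (insert A \<Y>)
  have "zclosed (\<Union>\<Y>)" "zclosed A" using insert by (auto intro: zclosed_Union)
  moreover have "Y \<subseteq> A \<union> \<Union>\<Y>" using insert by auto
  ultimately have "Y \<subseteq> A \<or> Y \<subseteq> \<Union>\<Y>" using assms(1) unfolding irreducible_closed_def by blast
  then show ?case using insert by auto
qed

lemma irr_component_split:
  fixes X :: "('n::finite \<Rightarrow> 'k::field) set set"
  assumes "zclosed X" "irr_component Y X"
  obtains C where "zclosed C" "X = Y \<union> C" "\<not> Y \<subseteq> C"
proof -
  obtain \<Y> where \<Y>: "finite \<Y>" "\<forall>Y\<in>\<Y>. irreducible_closed Y" "X = \<Union>\<Y>"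
    using zclosed_irreducible_decomposition[OF assms(1)] by blast
  have closed: "\<And>A. A \<in> \<Y> \<Longrightarrow> zclosed A" using \<Y>(2) unfolding irreducible_closed_def by blast
  have Y: "irreducible_closed Y" "Y \<subseteq> X" using assms(2) unfolding irr_component_def by auto
  have maximal: "A = Y" if "A \<in> \<Y>" "Y \<subseteq> A" for A
    using assms(2) that \<Y> unfolding irr_component_def by blast
  have "Y \<in> \<Y>"
    using irreducible_closed_subset_Union[OF Y(1) \<Y>(1) closed] Y(2) \<Y>(3) maximal by blast
  show ?thesis
  proof
    show "zclosed (\<Union>(\<Y> - {Y}))" using \<Y>(1) closed by (intro zclosed_Union) auto
    show "X = Y \<union> \<Union>(\<Y> - {Y})" using \<Y>(3) \<open>Y \<in> \<Y>\<close> by blast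
    show "\<not> Y \<subseteq> \<Union>(\<Y> - {Y})"
      using irreducible_closed_subset_Union[OF Y(1), of "\<Y> - {Y}"] \<Y>(1) closed maximal by blast
  qed
qed

section \<open>Orbit curves and Bialynicki-Birula strata\<close>

lemma polyfun_along_curve:
  fixes \<phi> :: "'n \<Rightarrow> 'k::field poly"
  shows "g \<in> polyfun \<Longrightarrow> \<exists>q. \<forall>c. g (\<lambda>i. poly (\<phi> i) c) = poly q c"
proof (induction rule: polyfun.induct)
  case (pconst c)
  show ?case by (intro exI[of _ "[:c:]"]) simp
next
  case (pvar i)
  show ?case by (intro exI[of _ "\<phi> i"]) simp
next
  case (padd f g)
  then obtain q1 q2 where "\<forall>c. f (\<lambda>i. poly (\<phi> i) c) = poly q1 c" "\<forall>c. g (\<lambda>i. poly (\<phi> i) c) = poly q2 c"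
    by blast
  then show ?case by (intro exI[of _ "q1 + q2"]) simp
next
  case (pmul f g)
  then obtain q1 q2 where "\<forall>c. f (\<lambda>i. poly (\<phi> i) c) = poly q1 c" "\<forall>c. g (\<lambda>i. poly (\<phi> i) c) = poly q2 c"
    by blast
  then show ?case by (intro exI[of _ "q1 * q2"]) simp
qed

lemma curve_in_zclosed_finite_or_UNIV:
  fixes \<phi> :: "'n::finite \<Rightarrow> 'k::field poly"
  assumes "zclosed C" and nz: "\<And>c. nonzero_vec (\<lambda>i. poly (\<phi> i) c)"
  shows "finite {c. line (\<lambda>i. poly (\<phi> i) c) \<in> C} \<or> {c. line (\<lambda>i. poly (\<phi> i) c) \<in> C} = UNIV"
proof -
  obtain F where F: "\<forall>f\<in>F. \<exists>d. homog d f" "C = zero_locus F"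
    using assms(1) unfolding zclosed_iff by blast
  show ?thesis
  proof (cases "\<forall>g\<in>F. \<forall>c. g (\<lambda>i. poly (\<phi> i) c) = 0")
    case True
    have "line (\<lambda>i. poly (\<phi> i) c) \<in> C" for c
      unfolding F(2) zero_locus_def PP_def
      using nz True F(1) homog_vanishes_on_line_iff by blast
    then show ?thesis by blast
  next
    case False
    then obtain g c0 where g: "g \<in> F" "g (\<lambda>i. poly (\<phi> i) c0) \<noteq> 0" by blast
    then have "g \<in> polyfun" using F(1) unfolding homog_def by blast
    then obtain q where q: "\<forall>c. g (\<lambda>i. poly (\<phi> i) c) = poly q c"
      using polyfun_along_curve by blast
    have "{c. line (\<lambda>i. poly (\<phi> i) c) \<in> C} \<subseteq> {c. poly q c = 0}"
      using g(1) q line_mem unfolding F(2) zero_locus_def by fastforce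
    moreover have "q \<noteq> 0" using g(2) q by auto
    ultimately show ?thesis using poly_roots_finite finite_subset by blast
  qed
qed

lemma alg_closed_infinite:
  assumes "alg_closed TYPE('k::field)"
  shows "infinite (UNIV :: 'k set)"
proof
  assume fin: "finite (UNIV :: 'k set)"
  define q :: "'k poly" where "q = (\<Prod>a\<in>UNIV. [:-a, 1:])"
  have "degree q = card (UNIV :: 'k set)"
    unfolding q_def by (subst degree_prod_eq_sum_degree) auto
  then have "degree q > 0" using fin by (simp add: card_gt_0_iff)
  moreover have "degree (q + 1) = degree q" using calculation by (intro degree_add_eq_left) simp
  ultimately have "degree (q + 1) > 0" by simp
  then obtain x where "poly (q + 1) x = 0" using assms unfolding alg_closed_def by blast
  moreover have "poly q x = 0" unfolding q_def poly_prod using fin by (simp add: prod_zero_iff)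
  ultimately show False by simp
qed

lemma mat_apply_id: "mat_apply mat_id x = x"
proof
  fix i
  have "mat_apply mat_id x i = (\<Sum>j\<in>UNIV. if i = j then x j else 0)"
    unfolding mat_apply_def mat_id_def by (rule sum.cong) auto
  then show "mat_apply mat_id x i = x i" by simp
qed

lemma mat_apply_mul: "mat_apply (mat_mul A B) x = mat_apply A (mat_apply B x)"
proof
  fix i
  have "mat_apply (mat_mul A B) x i = (\<Sum>j\<in>UNIV. \<Sum>l\<in>UNIV. A i l * B l j * x j)"
    by (simp add: mat_apply_def mat_mul_def sum_distrib_right)
  also have "\<dots> = (\<Sum>l\<in>UNIV. \<Sum>j\<in>UNIV. A i l * B l j * x j)"
    by (rule sum.swap)
  also have "\<dots> = mat_apply A (mat_apply B x) i"
    by (simp add: mat_apply_def sum_distrib_left mult.assoc)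
  finally show "mat_apply (mat_mul A B) x i = mat_apply A (mat_apply B x) i" .
qed

lemma cochar_one: "cochar a 1 = tone"
  by (simp add: cochar_def tone_def)

lemma cochar_in_torus: "c \<noteq> 0 \<Longrightarrow> cochar a c \<in> torus"
  by (simp add: cochar_def torus_def)

lemma cochar_mult: "cochar a (x * c) = tmul (cochar a x) (cochar a c)"
  by (simp add: cochar_def tmul_def power_int_mult_distrib)

lemma act_tone: "torus_rep \<rho> \<Longrightarrow> act \<rho> tone z = z"
  by (simp add: torus_rep_def act_def mat_apply_id)

lemma act_tmul:
  "torus_rep \<rho> \<Longrightarrow> t \<in> torus \<Longrightarrow> s \<in> torus \<Longrightarrow> act \<rho> (tmul t s) z = act \<rho> t (act \<rho> s z)"
  by (simp add: torus_rep_def act_def mat_apply_mul image_image)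

text \<open>The limit curve of S(c)z is that of z with its parameter rescaled by c.\<close>
lemma bb_stratum_cochar_invariant:
  fixes \<rho> :: "('r \<Rightarrow> 'k::field) \<Rightarrow> ('n::finite \<Rightarrow> 'n \<Rightarrow> 'k)"
  assumes rep: "torus_rep \<rho>" and inv: "T_invariant \<rho> X"
    and z: "z \<in> bb_stratum \<rho> a X f" and c: "c \<noteq> 0"
  shows "act \<rho> (cochar a c) z \<in> bb_stratum \<rho> a X f"
proof -
  obtain \<phi> :: "'n \<Rightarrow> 'k poly" where \<phi>: "nonzero_vec (\<lambda>i. poly (\<phi> i) 0)" "line (\<lambda>i. poly (\<phi> i) 0) = f"
    "\<forall>x. x \<noteq> 0 \<longrightarrow> nonzero_vec (\<lambda>i. poly (\<phi> i) x) \<and> line (\<lambda>i. poly (\<phi> i) x) = act \<rho> (cochar a x) z"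
    using z unfolding bb_stratum_def bb_limit_def by blast
  define \<psi> where "\<psi> i = pcompose (\<phi> i) [:0, c:]" for i
  have \<psi>: "poly (\<psi> i) x = poly (\<phi> i) (x * c)" for i x
    unfolding \<psi>_def by (simp add: poly_pcompose)
  have "bb_limit \<rho> a (act \<rho> (cochar a c) z) f"
    unfolding bb_limit_def
  proof (intro exI[of _ \<psi>] conjI allI impI)
    show "nonzero_vec (\<lambda>i. poly (\<psi> i) 0)" "line (\<lambda>i. poly (\<psi> i) 0) = f"
      using \<phi>(1,2) by (simp_all add: \<psi>)
    fix x :: 'k assume x: "x \<noteq> 0"
    then have xc: "x * c \<noteq> 0" using c by simp
    show "nonzero_vec (\<lambda>i. poly (\<psi> i) x)" using \<phi>(3) xc by (simp add: \<psi>)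
    have "line (\<lambda>i. poly (\<psi> i) x) = act \<rho> (cochar a (x * c)) z" using \<phi>(3) xc by (simp add: \<psi>)
    also have "\<dots> = act \<rho> (cochar a x) (act \<rho> (cochar a c) z)"
      unfolding cochar_mult using act_tmul[OF rep cochar_in_torus[OF x] cochar_in_torus[OF c]] .
    finally show "line (\<lambda>i. poly (\<psi> i) x) = act \<rho> (cochar a x) (act \<rho> (cochar a c) z)" .
  qed
  moreover have "act \<rho> (cochar a c) z \<in> X"
    using inv z cochar_in_torus[OF c] unfolding T_invariant_def bb_stratum_def by blast
  ultimately show ?thesis unfolding bb_stratum_def by blast
qed

lemma supporting_fp_irr_component:
  fixes \<rho> :: "('r \<Rightarrow> 'k::field) \<Rightarrow> ('n::finite \<Rightarrow> 'n \<Rightarrow> 'k)"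
  assumes "zclosed X" "irr_component Y X" "supporting_fp \<rho> a Y f"
  shows "supporting_fp \<rho> a X f"
proof -
  obtain C where C: "zclosed C" "X = Y \<union> C" "\<not> Y \<subseteq> C"
    using irr_component_split[OF assms(1,2)] .
  have Y: "irreducible_closed Y" "Y \<subseteq> X" using assms(2) unfolding irr_component_def by auto
  obtain U where U: "U \<noteq> {}" "zopen_in Y U" "U \<subseteq> bb_stratum \<rho> a Y f" and "f \<in> T_fixed \<rho> Y"
    using assms(3) unfolding supporting_fp_def by blast
  have "U \<subseteq> Y" "zclosed (Y - U)" using U(2) unfolding zopen_in_def by auto
  have "X - (U - C) = (Y - U) \<union> C" using C(2) \<open>U \<subseteq> Y\<close> by blast
  then have open_XU: "zopen_in X (U - C)"
    unfolding zopen_in_def using zclosed_Un[OF \<open>zclosed (Y - U)\<close> C(1)] \<open>U \<subseteq> Y\<close> Y(2) by auto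
  have ne: "U - C \<noteq> {}"
  proof
    assume "U - C = {}"
    then have "Y \<subseteq> (Y - U) \<union> C" by blast
    then have "Y \<subseteq> Y - U \<or> Y \<subseteq> C"
      using Y(1) \<open>zclosed (Y - U)\<close> C(1) unfolding irreducible_closed_def by blast
    then show False using U(1) \<open>U \<subseteq> Y\<close> C(3) by blast
  qed
  have stratum: "U - C \<subseteq> bb_stratum \<rho> a X f"
    using U(3) Y(2) unfolding bb_stratum_def by blast
  have "f \<in> T_fixed \<rho> X" using \<open>f \<in> T_fixed \<rho> Y\<close> Y(2) unfolding T_fixed_def by blast
  then show ?thesis
    unfolding supporting_fp_def using ne open_XU stratum by (intro conjI exI[of _ "U - C"])
qed

text \<open>The parameters c \<noteq> 0 with S(c)z in C are finitely many and exclude c = 1, so cofinitely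
  many S(c)z lie in Y; since Y is closed, the whole limit curve, including its value f at 0, does.\<close>
lemma bb_limit_in_zclosed:
  fixes \<rho> :: "('r \<Rightarrow> 'k::field) \<Rightarrow> ('n::finite \<Rightarrow> 'n \<Rightarrow> 'k)"
  assumes "infinite (UNIV :: 'k set)" "torus_rep \<rho>" "bb_limit \<rho> a z f"
    and "zclosed Y" "zclosed C" "z \<notin> C"
    and orbit: "\<And>c. c \<noteq> 0 \<Longrightarrow> act \<rho> (cochar a c) z \<in> Y \<union> C"
  shows "f \<in> Y"
proof -
  obtain \<phi> :: "'n \<Rightarrow> 'k poly" where \<phi>: "nonzero_vec (\<lambda>i. poly (\<phi> i) 0)" "line (\<lambda>i. poly (\<phi> i) 0) = f"
    "\<forall>c. c \<noteq> 0 \<longrightarrow> nonzero_vec (\<lambda>i. poly (\<phi> i) c) \<and> line (\<lambda>i. poly (\<phi> i) c) = act \<rho> (cochar a c) z"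
    using assms(3) unfolding bb_limit_def by blast
  have nz: "nonzero_vec (\<lambda>i. poly (\<phi> i) c)" for c
    using \<phi>(1,3) by (cases "c = 0") auto
  define AY where "AY = {c. line (\<lambda>i. poly (\<phi> i) c) \<in> Y}"
  define AC where "AC = {c. line (\<lambda>i. poly (\<phi> i) c) \<in> C}"
  have "line (\<lambda>i. poly (\<phi> i) 1) = z"
    using \<phi>(3) act_tone[OF assms(2)] by (simp add: cochar_one)
  then have "1 \<notin> AC" unfolding AC_def using assms(6) by simp
  then have "finite AC"
    using curve_in_zclosed_finite_or_UNIV[OF assms(5) nz] unfolding AC_def by blast
  moreover have "c \<in> insert 0 (AY \<union> AC)" for c
    using \<phi>(3) orbit[of c] unfolding AY_def AC_def by (cases "c = 0") auto
  ultimately have "infinite AY"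
    using assms(1) by (metis finite_Un finite_insert finite_subset subsetI)
  then have "AY = UNIV"
    using curve_in_zclosed_finite_or_UNIV[OF assms(4) nz] unfolding AY_def by blast
  then show "f \<in> Y" using \<phi>(2) unfolding AY_def by blast
qed

lemma fixed_point_in_irr_component_of_stratum_closure:
  fixes \<rho> :: "('r \<Rightarrow> 'k::field) \<Rightarrow> ('n::finite \<Rightarrow> 'n \<Rightarrow> 'k)"
  assumes "infinite (UNIV :: 'k set)" "torus_rep \<rho>" "zclosed X" "T_invariant \<rho> X"
    and Y: "irr_component Y (zclosure (bb_stratum \<rho> a X f))"
  shows "f \<in> Y"
proof -
  let ?Xf = "bb_stratum \<rho> a X f"
  have "?Xf \<subseteq> PP" using zclosed_subset_PP[OF assms(3)] unfolding bb_stratum_def by blast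
  then have closed: "zclosed (zclosure ?Xf)" by (rule zclosed_zclosure)
  obtain C where C: "zclosed C" "zclosure ?Xf = Y \<union> C" "\<not> Y \<subseteq> C"
    using irr_component_split[OF closed Y] .
  have "\<not> ?Xf \<subseteq> C"
  proof
    assume "?Xf \<subseteq> C"
    then have "zclosure ?Xf \<subseteq> C" using C(1) unfolding zclosure_def by blast
    then show False using C(2,3) by blast
  qed
  then obtain z where z: "z \<in> ?Xf" "z \<notin> C" by blast
  show ?thesis
  proof (rule bb_limit_in_zclosed[OF assms(1,2) _ _ C(1) z(2)])
    show "bb_limit \<rho> a z f" using z(1) unfolding bb_stratum_def by blast
    show "zclosed Y" using Y unfolding irr_component_def irreducible_closed_def by blast
    show "act \<rho> (cochar a c) z \<in> Y \<union> C" if "c \<noteq> 0" for c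
      using bb_stratum_cochar_invariant[OF assms(2,4) z(1) that] C(2)
      unfolding zclosure_def by blast
  qed
qed

theorem lemma3p3:
  fixes \<rho> :: "('r::finite \<Rightarrow> 'k::field) \<Rightarrow> ('n::finite \<Rightarrow> 'n \<Rightarrow> 'k)"
    and a :: "'r \<Rightarrow> int"
    and X :: "('n \<Rightarrow> 'k) set set"
  assumes "alg_closed TYPE('k)"
    and "torus_rep \<rho>"
    and "zclosed X"
    and "T_invariant \<rho> X"
    and "finite (T_fixed \<rho> X)"
    and "S_fixed \<rho> a X = T_fixed \<rho> X"
  shows "(\<forall>Y f. irr_component Y X \<and> supporting_fp \<rho> a Y f \<longrightarrow> supporting_fp \<rho> a X f) \<and>
         (\<forall>f\<in>T_fixed \<rho> X. \<forall>Y. irr_component Y (zclosure (bb_stratum \<rho> a X f)) \<longrightarrow> f \<in> Y)"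
  using supporting_fp_irr_component[OF assms(3)]
    fixed_point_in_irr_component_of_stratum_closure[OF alg_closed_infinite[OF assms(1)] assms(2-4)]
  by blast

end
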